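(* Let $R$ be an idempotent semiring finitely generated by a finite set $R_0$, let $B$ be an $R$-semimodule finitely generated by a finite set $B_0$, and let $n\ge2$. Let $\alpha:\Omega_n^*\to(R,\cdot,1)$ be a monoid morphism such that for some $b_0,b_1\in B$ and all $w\in\Omega_n^*$: $\alpha(w)\cdot b_0\ge b_1$ iff $w\in\mathcal D_n$. Suppose moreover that $b_1$ satisfies: for all $c_1,c_2\in B$, if $c_1+c_2\ge b_1$ then $c_1\ge b_1$ or $c_2\ge b_1$. Then for every context-free language $\mathcal L\subseteq A^*$ there exist a weighted $\mathbb T_R$-automaton $M$ with output semimodule $B$ and a state $x_0$ such that $\mathcal L=\{w\in A^*\mid \llbracket x_0\rrbracket_M(w)\ge b_1\}$.
   Context: $A$ is a finite input alphabet. For a semiring $R$, the semimodule monad $\mathbb T_R$ sends $X$ to the free left $R$-semimodule on $X$ (finitely supported maps $X\to R$, i.e. formal sums $r_1x_1+\dots+r_kx_k$); its algebras are left $R$-semimodules. If $R$ is idempotent ($1+1=1$), a semimodule $B$ is partially ordered by $b\le c$ iff $b+c=c$. $\Omega_n=\{(_1,)_1,\dots,(_n,)_n\}$ and $\mathcal D_n\subseteq\Omega_n^*$ is the Dyck language of balanced parenthesis words. A weighted $\mathbb T_R$-automaton consists of a finite set $X$ and maps $o:X\to B$, $t:A\times X\to\mathbb T_R X$; its trace semantics $\llbracket x\rrbracket_M:A^*\to B$ is $\llbracket x\rrbracket_M(w)=o(\partial_w(\eta(x)))$ where $\mathbb T_RX$ is made an $L$-coalgebra ($LY=B\times Y^A$)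 by the unique semimodule morphism $\mathbb T_RX\to B\times(\mathbb T_RX)^A$ extending $x\mapsto(o(x),\lambda a.t(a,x))$; explicitly $\llbracket x\rrbracket_M(\epsilon)=o(x)$ and $\llbracket x\rrbracket_M(au)=\sum_y t(a,x)(y)\cdot\llbracket y\rrbracket_M(u)$. *)

theory Defs
  imports Main
begin

inductive_set gen_semiring :: "'r::semiring_1 set \<Rightarrow> 'r set" for R0 :: "'r set" where
  gs_base: "r \<in> R0 \<Longrightarrow> r \<in> gen_semiring R0"
| gs_zero: "0 \<in> gen_semiring R0"
| gs_one: "1 \<in> gen_semiring R0"
| gs_add: "r \<in> gen_semiring R0 \<Longrightarrow> s \<in> gen_semiring R0 \<Longrightarrow> r + s \<in> gen_semiring R0"
| gs_mult: "r \<in> gen_semiring R0 \<Longrightarrow> s \<in> gen_semiring R0 \<Longrightarrow> r * s \<in> gen_semiring R0"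

definition semimodule :: "('r::semiring_1 \<Rightarrow> 'b::comm_monoid_add \<Rightarrow> 'b) \<Rightarrow> bool" where
  "semimodule act \<longleftrightarrow>
     (\<forall>r s b. act (r * s) b = act r (act s b)) \<and>
     (\<forall>b. act 1 b = b) \<and>
     (\<forall>r s b. act (r + s) b = act r b + act s b) \<and>
     (\<forall>r b c. act r (b + c) = act r b + act r c) \<and>
     (\<forall>b. act 0 b = 0) \<and>
     (\<forall>r. act r 0 = 0)"

inductive_set gen_semimodule :: "('r \<Rightarrow> 'b::comm_monoid_add \<Rightarrow> 'b) \<Rightarrow> 'b set \<Rightarrow> 'b set"
  for act :: "'r \<Rightarrow> 'b \<Rightarrow> 'b" and B0 :: "'b set" where
  gm_base: "b \<in> B0 \<Longrightarrow> b \<in> gen_semimodule act B0"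
| gm_zero: "0 \<in> gen_semimodule act B0"
| gm_add: "b \<in> gen_semimodule act B0 \<Longrightarrow> c \<in> gen_semimodule act B0 \<Longrightarrow> b + c \<in> gen_semimodule act B0"
| gm_act: "b \<in> gen_semimodule act B0 \<Longrightarrow> act r b \<in> gen_semimodule act B0"

definition leqB :: "'b::comm_monoid_add \<Rightarrow> 'b \<Rightarrow> bool" where
  "leqB b c \<longleftrightarrow> b + c = c"

datatype paren = Op nat | Cl nat

definition Omega :: "nat \<Rightarrow> paren set" where
  "Omega n = {Op i | i. 1 \<le> i \<and> i \<le> n} \<union> {Cl i | i. 1 \<le> i \<and> i \<le> n}"

inductive_set Dyck :: "nat \<Rightarrow> paren list set" for n :: nat where
  dyck_nil: "[] \<in> Dyck n"
| dyck_wrap: "1 \<le> i \<Longrightarrow> i \<le> n \<Longrightarrow> u \<in> Dyck n \<Longrightarrow> v \<in> Dyck n \<Longrightarrow>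
     (Op i # u @ [Cl i]) @ v \<in> Dyck n"

definition monoid_morph :: "nat \<Rightarrow> (paren list \<Rightarrow> 'r::monoid_mult) \<Rightarrow> bool" where
  "monoid_morph n \<alpha> \<longleftrightarrow> \<alpha> [] = 1 \<and>
     (\<forall>u \<in> lists (Omega n). \<forall>v \<in> lists (Omega n). \<alpha> (u @ v) = \<alpha> u * \<alpha> v)"

text \<open>A grammar is a set of productions (nonterminal, right-hand side); nonterminals are
  natural numbers, terminals are letters of 'a.  derives P xs w: the sentential form xs
  derives the terminal word w.\<close>
inductive derives :: "(nat \<times> (nat + 'a) list) set \<Rightarrow> (nat + 'a) list \<Rightarrow> 'a list \<Rightarrow> bool"
  for P :: "(nat \<times> (nat + 'a) list) set" where
  der_nil: "derives P [] []"
| der_term: "derives P xs w \<Longrightarrow> derives P (Inr a # xs) (a # w)"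
| der_nt: "(N, rhs) \<in> P \<Longrightarrow> derives P rhs u \<Longrightarrow> derives P xs w \<Longrightarrow>
     derives P (Inl N # xs) (u @ w)"

definition cfl :: "'a list set \<Rightarrow> bool" where
  "cfl L \<longleftrightarrow> (\<exists>P S. finite P \<and> L = {w. derives P [Inl S] w})"

text \<open>A weighted T_R automaton with finite state set X, output o and transitions t,
  where t a x is the formal sum \<Sum> y\<in>X. (t a x y) y.  Trace semantics.\<close>
fun trace :: "('r \<Rightarrow> 'b::comm_monoid_add \<Rightarrow> 'b) \<Rightarrow> nat set \<Rightarrow> (nat \<Rightarrow> 'b)
    \<Rightarrow> ('a \<Rightarrow> nat \<Rightarrow> nat \<Rightarrow> 'r) \<Rightarrow> nat \<Rightarrow> 'a list \<Rightarrow> 'b" where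
  "trace act X out t x [] = out x"
| "trace act X out t x (a # u) = (\<Sum>y\<in>X. act (t a x y) (trace act X out t y u))"

end

theory Submission
  imports Defs
begin

text \<open>
  A context-free language is recognised by a real-time stack machine whose
  stack alphabet is a finite set of items of the grammar: an item denotes either the
  nonempty words derived from a grammar symbol, or the nonempty rests of words derived from a
  symbol t that have a given symbol s as left corner.  The quotient of an item language by a
  letter is a finite union of concatenations of item languages, so reading a letter pops the
  top item and pushes one of finitely many item strings.  Items are numbered injectively and
  number k is pushed as the bracket word (_2 (_1^k (_2 and popped as the matching closing
  word; along every run the machine thus emits a bracket word, and the run empties the
  stack iff that word is a Dyck word.  Weighting each emitted word v by \<alpha> v turns the
  machine into a weighted automaton; since b1 is prime for + (and not below 0), the trace
  of a word is \<ge> b1 iff some run emits a word v with \<alpha> v \<cdot> b0 \<ge> b1, i.e. a Dyck word.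
\<close>

lemma semimodule_act_mult: "semimodule act \<Longrightarrow> act (r * s) b = act r (act s b)"
  by (simp add: semimodule_def)

lemma semimodule_act_one: "semimodule act \<Longrightarrow> act 1 b = b"
  by (simp add: semimodule_def)

lemma semimodule_act_sum_right: "semimodule act \<Longrightarrow> act r (sum f F) = (\<Sum>x\<in>F. act r (f x))"
  by (induction F rule: infinite_finite_induct) (simp_all add: semimodule_def)

lemma semimodule_act_sum_left: "semimodule act \<Longrightarrow> act (sum f F) b = (\<Sum>x\<in>F. act (f x) b)"
  by (induction F rule: infinite_finite_induct) (simp_all add: semimodule_def)

lemma leqB_add_right: "leqB b c \<Longrightarrow> leqB b (c + d)"
  unfolding leqB_def by (metis add.assoc)

text \<open>An element that is prime for + and not below 0 lies below a finite sum iff it lies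
  below one of the summands.  This turns weighted sums into existential choices.\<close>

lemma prime_leqB_sum:
  assumes prime: "\<forall>c1 c2. leqB b (c1 + c2) \<longrightarrow> leqB b c1 \<or> leqB b c2"
    and not_zero: "\<not> leqB b 0"
    and "finite F"
  shows "leqB b (sum f F) \<longleftrightarrow> (\<exists>x\<in>F. leqB b (f x))"
  using \<open>finite F\<close>
proof (induction F rule: finite_induct)
  case empty then show ?case using not_zero by simp
next
  case (insert x F)
  have "leqB b (f x + sum f F) \<longleftrightarrow> leqB b (f x) \<or> leqB b (sum f F)"
    using prime leqB_add_right[of b "f x" "sum f F"] leqB_add_right[of b "sum f F" "f x"]
    by (metis add.commute)
  then show ?case using insert by simp
qed

section \<open>Stack runs and the Dyck language\<close>

fun stack_run :: "nat list \<Rightarrow> paren list \<Rightarrow> nat list option" where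
  "stack_run s [] = Some s"
| "stack_run s (Op i # u) = stack_run (i # s) u"
| "stack_run [] (Cl i # u) = None"
| "stack_run (j # s) (Cl i # u) = (if i = j then stack_run s u else None)"

lemma stack_run_append: "stack_run s (u @ v) = Option.bind (stack_run s u) (\<lambda>s'. stack_run s' v)"
  by (induction s u rule: stack_run.induct) auto

lemma Dyck_stack_run: "u \<in> Dyck n \<Longrightarrow> stack_run s (u @ r) = stack_run s r"
proof (induction arbitrary: s r rule: Dyck.induct)
  case dyck_nil then show ?case by simp
next
  case (dyck_wrap i u v)
  have "stack_run s ((Op i # u @ [Cl i]) @ v @ r) = stack_run (i # s) (u @ (Cl i # v @ r))"
    by simp
  also have "\<dots> = stack_run (i # s) (Cl i # v @ r)" by (rule dyck_wrap.IH(1))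
  also have "\<dots> = stack_run s (v @ r)" by simp
  also have "\<dots> = stack_run s r" by (rule dyck_wrap.IH(2))
  finally show ?case by simp
qed

text \<open>Inserting a matched pair of brackets anywhere into a Dyck word gives a Dyck word;
  this is what is needed to rebuild a Dyck derivation from a successful stack run.\<close>

lemma Dyck_insert_pair:
  assumes "x @ y \<in> Dyck n" "1 \<le> i" "i \<le> n"
  shows "x @ Op i # Cl i # y \<in> Dyck n"
proof -
  have "w \<in> Dyck n \<Longrightarrow> w = x @ y \<Longrightarrow> x @ Op i # Cl i # y \<in> Dyck n" for w
  proof (induction arbitrary: x y rule: Dyck.induct)
    case dyck_nil
    then show ?case using dyck_wrap[OF assms(2,3) Dyck.dyck_nil Dyck.dyck_nil] by simp
  next
    case (dyck_wrap j u v)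
    show ?case
    proof (cases x)
      case Nil
      then show ?thesis
        using dyck_wrap.prems Dyck.dyck_wrap[OF assms(2,3) Dyck.dyck_nil
            Dyck.dyck_wrap[OF dyck_wrap.hyps]] by simp
    next
      case (Cons c x')
      with dyck_wrap.prems have c: "c = Op j" and eq: "x' @ y = u @ Cl j # v" by auto
      from eq obtain us where "(x' = u @ us \<and> us @ y = Cl j # v) \<or> (x' @ us = u \<and> y = us @ Cl j # v)"
        unfolding append_eq_append_conv2 by blast
      then consider (inner) "x' @ us = u" "y = us @ Cl j # v"
        | (at_close) "x' = u" "y = Cl j # v"
        | (outer) us' where "x' = u @ Cl j # us'" "us' @ y = v"
        by (cases us) auto
      then show ?thesis
      proof cases
        case inner
        then have "x' @ Op i # Cl i # us \<in> Dyck n" using dyck_wrap.IH(1) by simp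
        from Dyck.dyck_wrap[OF dyck_wrap.hyps(1,2) this dyck_wrap.hyps(4)]
        show ?thesis using Cons c inner by simp
      next
        case at_close
        have "u @ [Op i, Cl i] \<in> Dyck n" using dyck_wrap.IH(1)[of u "[]"] by simp
        from Dyck.dyck_wrap[OF dyck_wrap.hyps(1,2) this dyck_wrap.hyps(4)]
        show ?thesis using Cons c at_close by simp
      next
        case outer
        then have "us' @ Op i # Cl i # y \<in> Dyck n" using dyck_wrap.IH(2) by simp
        from Dyck.dyck_wrap[OF dyck_wrap.hyps(1,2,3) this]
        show ?thesis using Cons c outer by simp
      qed
    qed
  qed
  then show ?thesis using assms(1) by blast
qed

lemma stack_run_Dyck:
  "stack_run s u = Some [] \<Longrightarrow> u \<in> lists (Omega n) \<Longrightarrow> map Op (rev s) @ u \<in> Dyck n"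
proof (induction s u rule: stack_run.induct)
  case (1 s) then show ?case by (simp add: Dyck.dyck_nil)
next
  case (2 s i u) then show ?case by simp
next
  case (3 i u) then show ?case by simp
next
  case (4 j s i u)
  then have ij: "i = j" and run: "stack_run s u = Some []" by (auto split: if_splits)
  from "4.prems" have "1 \<le> i" "i \<le> n" unfolding Omega_def by auto
  moreover from "4.IH"[OF ij run] "4.prems" have "map Op (rev s) @ u \<in> Dyck n" by simp
  ultimately show ?case using Dyck_insert_pair ij by simp
qed

lemma Dyck_iff_stack_run: "u \<in> lists (Omega n) \<Longrightarrow> u \<in> Dyck n \<longleftrightarrow> stack_run [] u = Some []"
  using Dyck_stack_run[of u n "[]" "[]"] stack_run_Dyck[of "[]" u n] by auto

text \<open>A single opening bracket is not balanced; this shows that b1 is not below 0.\<close>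

lemma Op_not_Dyck: "[Op i] \<notin> Dyck n"
  by (auto elim: Dyck.cases)

section \<open>Encoding stacks of numbers by brackets of two types\<close>

definition code :: "nat \<Rightarrow> nat list" where
  "code k = 2 # replicate k 1 @ [2]"

definition push_word :: "nat \<Rightarrow> paren list" where
  "push_word k = map Op (code k)"

definition pop_word :: "nat \<Rightarrow> paren list" where
  "pop_word k = map Cl (code k)"

text \<open>push_stack f d pushes the items of d, the head of d ending on top.\<close>

fun push_stack :: "('i \<Rightarrow> nat) \<Rightarrow> 'i list \<Rightarrow> paren list" where
  "push_stack f [] = []"
| "push_stack f (g # d) = push_stack f d @ push_word (f g)"

definition enc :: "('i \<Rightarrow> nat) \<Rightarrow> 'i list \<Rightarrow> nat list" where
  "enc f s = concat (map (\<lambda>g. code (f g)) s)"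

lemma enc_Nil_iff: "enc f s = [] \<longleftrightarrow> s = []"
  by (cases s) (auto simp: enc_def code_def)

lemma enc_Cons: "enc f (g # s) = code (f g) @ enc f s"
  by (simp add: enc_def)

lemma enc_append: "enc f (d @ s) = enc f d @ enc f s"
  by (simp add: enc_def)

lemma stack_run_push_stack: "stack_run s (push_stack f d @ r) = stack_run (enc f d @ s) r"
proof -
  have Ops: "stack_run s (map Op xs) = Some (rev xs @ s)" for s xs
    by (induction xs arbitrary: s) auto
  have rev_code: "rev (code k) = code k" for k
    by (simp add: code_def)
  have "stack_run s (push_stack f d) = Some (enc f d @ s)" for s
    by (induction d arbitrary: s) (simp_all add: enc_def stack_run_append push_word_def Ops rev_code)
  then show ?thesis by (simp add: stack_run_append)
qed

lemma stack_run_pop_word: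
  "stack_run (code j @ s) (pop_word k @ r) = (if j = k then stack_run s r else None)"
proof -
  have "stack_run (replicate j 1 @ 2 # s) (replicate k (Cl 1) @ Cl 2 # r) =
      (if j = k then stack_run s r else None)" for j k
    by (induction k arbitrary: j) (case_tac j; auto)+
  then show ?thesis unfolding code_def pop_word_def by simp
qed

lemma stack_run_pop_word_Nil: "stack_run [] (pop_word k @ r) = None"
  by (simp add: pop_word_def code_def)

lemma push_stack_in_lists: "push_stack f d \<in> lists {Op 1, Op 2}"
  by (induction d) (auto simp: push_word_def code_def)

lemma pop_word_in_lists: "pop_word k \<in> lists {Cl 1, Cl 2}"
  by (auto simp: pop_word_def code_def)

section \<open>Bracket machines and their weighted traces\<close>

fun emits :: "('a \<Rightarrow> nat \<Rightarrow> nat \<Rightarrow> paren list set) \<Rightarrow> (nat \<Rightarrow> paren list set) \<Rightarrow> nat set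
    \<Rightarrow> nat \<Rightarrow> 'a list \<Rightarrow> paren list set" where
  "emits T Ou X x [] = Ou x"
| "emits T Ou X x (a # w) = (\<Union>y\<in>X. \<Union>v\<in>T a x y. (\<lambda>r. v @ r) ` emits T Ou X y w)"

lemma emits_in_lists:
  assumes "\<And>a x y. T a x y \<subseteq> lists A" and "\<And>x. Ou x \<subseteq> lists A"
  shows "emits T Ou X x w \<subseteq> lists A"
proof (induction w arbitrary: x)
  case Nil
  then show ?case using assms(2) by simp
next
  case (Cons a w)
  show ?case
  proof
    fix r assume "r \<in> emits T Ou X x (a # w)"
    then obtain y v r' where "v \<in> T a x y" "r' \<in> emits T Ou X y w" "r = v @ r'" by auto
    then show "r \<in> lists A" using assms(1)[of a x y] Cons.IH[of y] by auto
  qed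
qed

definition weighted_out :: "('r \<Rightarrow> 'b::comm_monoid_add \<Rightarrow> 'b) \<Rightarrow> (paren list \<Rightarrow> 'r) \<Rightarrow> 'b
    \<Rightarrow> (nat \<Rightarrow> paren list set) \<Rightarrow> nat \<Rightarrow> 'b" where
  "weighted_out act \<alpha> b0 Ou x = (\<Sum>v\<in>Ou x. act (\<alpha> v) b0)"

definition weighted_trans :: "(paren list \<Rightarrow> 'r::semiring_1) \<Rightarrow> nat set
    \<Rightarrow> ('a \<Rightarrow> nat \<Rightarrow> nat \<Rightarrow> paren list set) \<Rightarrow> 'a \<Rightarrow> nat \<Rightarrow> nat \<Rightarrow> 'r" where
  "weighted_trans \<alpha> X T a x y = (if y \<in> X then \<Sum>v\<in>T a x y. \<alpha> v else 0)"

lemma act_alpha_append: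
  assumes smod: "semimodule act" and morph: "monoid_morph n \<alpha>"
    and "u \<in> lists (Omega n)" "v \<in> lists (Omega n)"
  shows "act (\<alpha> u) (act (\<alpha> v) c) = act (\<alpha> (u @ v)) c"
  using assms by (simp add: monoid_morph_def semimodule_act_mult[OF smod, symmetric])

lemma weighted_trace_Dyck:
  assumes smod: "semimodule act" and morph: "monoid_morph n \<alpha>"
    and dyck: "\<forall>w \<in> lists (Omega n). leqB b1 (act (\<alpha> w) b0) \<longleftrightarrow> w \<in> Dyck n"
    and prime: "\<forall>c1 c2. leqB b1 (c1 + c2) \<longrightarrow> leqB b1 c1 \<or> leqB b1 c2"
    and not_zero: "\<not> leqB b1 0" and X: "finite X"
    and T: "\<And>a x y. finite (T a x y) \<and> T a x y \<subseteq> lists (Omega n)"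
    and Ou: "\<And>x. finite (Ou x) \<and> Ou x \<subseteq> lists (Omega n)"
    and u: "u \<in> lists (Omega n)"
  shows "leqB b1 (act (\<alpha> u) (trace act X (weighted_out act \<alpha> b0 Ou) (weighted_trans \<alpha> X T) x w))
    \<longleftrightarrow> (\<exists>r\<in>emits T Ou X x w. u @ r \<in> Dyck n)"
  using u
proof (induction w arbitrary: x u)
  case Nil
  have "act (\<alpha> u) (weighted_out act \<alpha> b0 Ou x) = (\<Sum>v\<in>Ou x. act (\<alpha> (u @ v)) b0)"
    using act_alpha_append[OF smod morph Nil.prems] Ou[of x]
    by (auto simp: weighted_out_def semimodule_act_sum_right[OF smod] intro!: sum.cong)
  then have "leqB b1 (act (\<alpha> u) (weighted_out act \<alpha> b0 Ou x)) \<longleftrightarrow>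
      (\<exists>v\<in>Ou x. leqB b1 (act (\<alpha> (u @ v)) b0))"
    using Ou[of x] by (simp add: prime_leqB_sum[OF prime not_zero])
  also have "\<dots> \<longleftrightarrow> (\<exists>v\<in>Ou x. u @ v \<in> Dyck n)"
  proof (rule bex_cong[OF refl])
    fix v assume "v \<in> Ou x"
    then have "u @ v \<in> lists (Omega n)" using Ou Nil.prems by auto
    then show "leqB b1 (act (\<alpha> (u @ v)) b0) \<longleftrightarrow> u @ v \<in> Dyck n" using dyck by blast
  qed
  finally show ?case by simp
next
  case (Cons a w)
  let ?tr = "trace act X (weighted_out act \<alpha> b0 Ou) (weighted_trans \<alpha> X T)"
  have "v \<in> lists (Omega n)" if "v \<in> T a x y" for y v
    using T that by blast
  then have "act (\<alpha> u) (?tr x (a # w)) = (\<Sum>y\<in>X. \<Sum>v\<in>T a x y. act (\<alpha> (u @ v)) (?tr y w))"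
    using act_alpha_append[OF smod morph Cons.prems]
    by (auto simp: weighted_trans_def semimodule_act_sum_left[OF smod]
        semimodule_act_sum_right[OF smod] intro!: sum.cong)
  then have "leqB b1 (act (\<alpha> u) (?tr x (a # w))) \<longleftrightarrow>
      (\<exists>y\<in>X. \<exists>v\<in>T a x y. leqB b1 (act (\<alpha> (u @ v)) (?tr y w)))"
    using X T[of a x] by (simp add: prime_leqB_sum[OF prime not_zero])
  also have "\<dots> \<longleftrightarrow> (\<exists>y\<in>X. \<exists>v\<in>T a x y. \<exists>r\<in>emits T Ou X y w. (u @ v) @ r \<in> Dyck n)"
  proof (intro bex_cong[OF refl])
    fix y v assume "v \<in> T a x y"
    then have "u @ v \<in> lists (Omega n)" using T[of a x y] Cons.prems by auto
    then show "leqB b1 (act (\<alpha> (u @ v)) (?tr y w)) \<longleftrightarrow> (\<exists>r\<in>emits T Ou X y w. (u @ v) @ r \<in> Dyck n)"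
      by (rule Cons.IH)
  qed
  finally show ?case by auto
qed

lemma weighted_trace_accepts:
  assumes smod: "semimodule act" and morph: "monoid_morph n \<alpha>" and n: "1 \<le> n"
    and dyck: "\<forall>w \<in> lists (Omega n). leqB b1 (act (\<alpha> w) b0) \<longleftrightarrow> w \<in> Dyck n"
    and prime: "\<forall>c1 c2. leqB b1 (c1 + c2) \<longrightarrow> leqB b1 c1 \<or> leqB b1 c2"
    and X: "finite X"
    and T: "\<And>a x y. finite (T a x y) \<and> T a x y \<subseteq> lists (Omega n)"
    and Ou: "\<And>x. finite (Ou x) \<and> Ou x \<subseteq> lists (Omega n)"
  shows "leqB b1 (trace act X (weighted_out act \<alpha> b0 Ou) (weighted_trans \<alpha> X T) x w)
    \<longleftrightarrow> (\<exists>r\<in>emits T Ou X x w. stack_run [] r = Some [])"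
proof -
  let ?tr = "trace act X (weighted_out act \<alpha> b0 Ou) (weighted_trans \<alpha> X T) x w"
  have not_zero: "\<not> leqB b1 0"
  proof
    assume "leqB b1 0"
    then have "leqB b1 (act (\<alpha> [Op 1]) b0)" by (simp add: leqB_def)
    moreover have "[Op 1] \<in> lists (Omega n)" using n by (auto simp: Omega_def)
    ultimately show False using dyck Op_not_Dyck by blast
  qed
  have emitted: "emits T Ou X x w \<subseteq> lists (Omega n)"
    by (rule emits_in_lists) (use T Ou in blast)+
  have "\<alpha> [] = 1" using morph by (simp add: monoid_morph_def)
  then have "leqB b1 ?tr \<longleftrightarrow> leqB b1 (act (\<alpha> []) ?tr)"
    by (simp add: semimodule_act_one[OF smod])
  also have "\<dots> \<longleftrightarrow> (\<exists>r\<in>emits T Ou X x w. [] @ r \<in> Dyck n)"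
    by (rule weighted_trace_Dyck[OF smod morph dyck prime not_zero X T Ou]) simp
  also have "\<dots> \<longleftrightarrow> (\<exists>r\<in>emits T Ou X x w. stack_run [] r = Some [])"
    using Dyck_iff_stack_run[of _ n] emitted by (simp add: subset_iff)
  finally show ?thesis .
qed

section \<open>A stack machine for a quotient-closed family of languages\<close>

definition conc :: "'a list set \<Rightarrow> 'a list set \<Rightarrow> 'a list set" where
  "conc A B = {u @ v | u v. u \<in> A \<and> v \<in> B}"

fun concs :: "('i \<Rightarrow> 'a list set) \<Rightarrow> 'i list \<Rightarrow> 'a list set" where
  "concs lang [] = {[]}"
| "concs lang (g # d) = conc (lang g) (concs lang d)"

lemma conc_assoc: "conc (conc A B) C = conc A (conc B C)"
  unfolding conc_def by (auto, metis append_assoc, metis append_assoc)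

lemma conc_UN_left: "conc (\<Union>x\<in>I. A x) B = (\<Union>x\<in>I. conc (A x) B)"
  by (auto simp: conc_def)

lemma conc_UN_right: "conc A (\<Union>x\<in>I. B x) = (\<Union>x\<in>I. conc A (B x))"
  by (auto simp: conc_def)

lemma conc_Nil_left: "conc {[]} A = A"
  by (simp add: conc_def)

lemma concs_append: "concs lang (d @ s) = conc (concs lang d) (concs lang s)"
  by (induction d) (simp_all add: conc_assoc conc_Nil_left)

lemma Cons_in_conc_iff: "[] \<notin> A \<Longrightarrow> a # w \<in> conc A B \<longleftrightarrow> w \<in> conc {u. a # u \<in> A} B"
  unfolding conc_def by (auto simp: Cons_eq_append_conv)

text \<open>The stack machine on the states 0 (initial) and 1 (running) for an item family lang
  with quotient decompositions D and numbering f: from 0 it reads the first letter of a word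
  of lang g0 and pushes the remaining items; from 1 it pops the top item g and pushes the
  items of a decomposition of the quotient of lang g by the letter read.\<close>

definition stack_trans :: "('i \<Rightarrow> nat) \<Rightarrow> 'i set \<Rightarrow> ('i \<Rightarrow> 'a \<Rightarrow> 'i list set) \<Rightarrow> 'i
    \<Rightarrow> 'a \<Rightarrow> nat \<Rightarrow> nat \<Rightarrow> paren list set" where
  "stack_trans f I D g0 a x y =
     (if x = 0 \<and> y = 1 then push_stack f ` D g0 a
      else if x = 1 \<and> y = 1 then (\<Union>g\<in>I. (\<lambda>d. pop_word (f g) @ push_stack f d) ` D g a)
      else {})"

definition stack_out :: "'a list set \<Rightarrow> nat \<Rightarrow> paren list set" where
  "stack_out L x = (if x = 1 \<or> [] \<in> L then {[]} else {})"

lemma stack_machine_running: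
  assumes inj: "inj_on f I" and eps_free: "\<And>g. g \<in> I \<Longrightarrow> [] \<notin> lang g"
    and quot: "\<And>g a. g \<in> I \<Longrightarrow> D g a \<subseteq> lists I \<and> {w. a # w \<in> lang g} = (\<Union>d\<in>D g a. concs lang d)"
    and s: "s \<in> lists I"
  shows "(\<exists>r\<in>emits (stack_trans f I D g0) (stack_out L) {0, 1} 1 w. stack_run (enc f s) r = Some [])
    \<longleftrightarrow> w \<in> concs lang s"
  using s
proof (induction w arbitrary: s)
  case Nil
  have "[] \<in> concs lang s \<longleftrightarrow> s = []"
    using Nil eps_free by (cases s) (auto simp: conc_def)
  then show ?case by (simp add: stack_out_def enc_Nil_iff)
next
  case (Cons a w)
  let ?acc = "\<lambda>s w. \<exists>r\<in>emits (stack_trans f I D g0) (stack_out L) {0, 1} 1 w. stack_run s r = Some []"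
  have step: "?acc (enc f s) (a # w) \<longleftrightarrow>
      (\<exists>g\<in>I. \<exists>d\<in>D g a. \<exists>r\<in>emits (stack_trans f I D g0) (stack_out L) {0, 1} 1 w.
         stack_run (enc f s) (pop_word (f g) @ push_stack f d @ r) = Some [])"
    by (auto simp: stack_trans_def)
  show ?case
  proof (cases s)
    case Nil
    then show ?thesis using step by (simp add: enc_def stack_run_pop_word_Nil)
  next
    case (Cons top s')
    with Cons.prems have top: "top \<in> I" and s': "s' \<in> lists I" by auto
    have run: "stack_run (enc f s) (pop_word (f g) @ push_stack f d @ r) = Some [] \<longleftrightarrow>
        f g = f top \<and> stack_run (enc f (d @ s')) r = Some []" for g d r
      by (auto simp: Cons enc_Cons stack_run_pop_word stack_run_push_stack enc_append)
    note step
    also have "(\<exists>g\<in>I. \<exists>d\<in>D g a. \<exists>r\<in>emits (stack_trans f I D g0) (stack_out L) {0, 1} 1 w.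
         stack_run (enc f s) (pop_word (f g) @ push_stack f d @ r) = Some []) \<longleftrightarrow>
        (\<exists>g\<in>I. f g = f top \<and> (\<exists>d\<in>D g a. ?acc (enc f (d @ s')) w))"
      unfolding run by auto
    also have "\<dots> \<longleftrightarrow> (\<exists>d\<in>D top a. ?acc (enc f (d @ s')) w)"
      using inj_on_eq_iff[OF inj _ top] top by blast
    also have "\<dots> \<longleftrightarrow> (\<exists>d\<in>D top a. w \<in> concs lang (d @ s'))"
    proof (rule bex_cong[OF refl])
      fix d assume "d \<in> D top a"
      then have "d @ s' \<in> lists I" using quot[OF top] s' by auto
      then show "?acc (enc f (d @ s')) w \<longleftrightarrow> w \<in> concs lang (d @ s')" by (rule Cons.IH)
    qed
    also have "\<dots> \<longleftrightarrow> w \<in> conc {u. a # u \<in> lang top} (concs lang s')"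
      using quot[OF top, of a] by (simp add: concs_append conc_UN_left)
    also have "\<dots> \<longleftrightarrow> a # w \<in> concs lang s"
      using Cons_in_conc_iff[OF eps_free[OF top]] Cons by simp
    finally show ?thesis .
  qed
qed

lemma stack_machine_accepts:
  assumes inj: "inj_on f I" and eps_free: "\<And>g. g \<in> I \<Longrightarrow> [] \<notin> lang g"
    and quot: "\<And>g a. g \<in> I \<Longrightarrow> D g a \<subseteq> lists I \<and> {w. a # w \<in> lang g} = (\<Union>d\<in>D g a. concs lang d)"
    and g0: "g0 \<in> I" and L: "\<And>a w. a # w \<in> L \<longleftrightarrow> a # w \<in> lang g0"
  shows "(\<exists>r\<in>emits (stack_trans f I D g0) (stack_out L) {0, 1} 0 w. stack_run [] r = Some [])
    \<longleftrightarrow> w \<in> L"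
proof (cases w)
  case Nil
  then show ?thesis by (simp add: stack_out_def)
next
  case (Cons a w')
  let ?acc = "\<lambda>x s w. \<exists>r\<in>emits (stack_trans f I D g0) (stack_out L) {0, 1} x w. stack_run s r = Some []"
  have "?acc 0 [] (a # w') \<longleftrightarrow> (\<exists>d\<in>D g0 a. \<exists>r\<in>emits (stack_trans f I D g0) (stack_out L) {0, 1} 1 w'.
      stack_run [] (push_stack f d @ r) = Some [])"
    by (auto simp: stack_trans_def)
  also have "\<dots> \<longleftrightarrow> (\<exists>d\<in>D g0 a. ?acc 1 (enc f d) w')"
    by (simp add: stack_run_push_stack)
  also have "\<dots> \<longleftrightarrow> (\<exists>d\<in>D g0 a. w' \<in> concs lang d)"
  proof (rule bex_cong[OF refl])
    fix d assume "d \<in> D g0 a"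
    then have "d \<in> lists I" using quot[OF g0] by auto
    then show "?acc 1 (enc f d) w' \<longleftrightarrow> w' \<in> concs lang d"
      using stack_machine_running[OF inj eps_free quot] by blast
  qed
  also have "\<dots> \<longleftrightarrow> a # w' \<in> L"
    using quot[OF g0, of a] L by blast
  finally show ?thesis using Cons by simp
qed

lemma derives_Nil_iff: "derives P [] w \<longleftrightarrow> w = []"
proof
  assume "derives P [] w" then show "w = []" by (cases rule: derives.cases) auto
qed (simp add: derives.der_nil)

lemma derives_append:
  "derives P xs u \<Longrightarrow> derives P ys v \<Longrightarrow> derives P (xs @ ys) (u @ v)"
proof (induction rule: derives.induct)
  case der_nil then show ?case by simp
next
  case (der_term xs w a) then show ?case by (simp add: derives.der_term)
next
  case (der_nt N rhs u xs w) then show ?case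
    using derives.der_nt[of N rhs P u "xs @ ys" "w @ v"] by simp
qed

lemma derives_split:
  "derives P zs w \<Longrightarrow> zs = xs @ ys \<Longrightarrow> \<exists>u v. w = u @ v \<and> derives P xs u \<and> derives P ys v"
proof (induction arbitrary: xs rule: derives.induct)
  case der_nil then show ?case by (simp add: derives.der_nil)
next
  case (der_term zs w a)
  show ?case
  proof (cases xs)
    case Nil
    then show ?thesis using der_term derives.der_term derives.der_nil by fastforce
  next
    case (Cons x xs')
    with der_term.prems have "x = Inr a" "zs = xs' @ ys" by auto
    with der_term.IH obtain u v where "w = u @ v" "derives P xs' u" "derives P ys v" by blast
    then show ?thesis using Cons \<open>x = Inr a\<close>
      by (intro exI[of _ "a # u"] exI[of _ v]) (auto intro: derives.der_term)
  qed
next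
  case (der_nt N rhs u zs w)
  show ?case
  proof (cases xs)
    case Nil
    then show ?thesis using der_nt derives.der_nt[OF der_nt.hyps(1,2,3)] derives.der_nil by fastforce
  next
    case (Cons x xs')
    with der_nt.prems have "x = Inl N" "zs = xs' @ ys" by auto
    with der_nt.IH(2) obtain u' v where "w = u' @ v" "derives P xs' u'" "derives P ys v" by blast
    then show ?thesis using Cons \<open>x = Inl N\<close> der_nt
      by (intro exI[of _ "u @ u'"] exI[of _ v]) (auto intro: derives.der_nt)
  qed
qed

lemma derives_append_iff:
  "derives P (xs @ ys) w \<longleftrightarrow> (\<exists>u v. w = u @ v \<and> derives P xs u \<and> derives P ys v)"
  using derives_split[OF _ refl, of P xs ys w] derives_append[of P xs _ ys] by blast

lemma derives_Cons_iff:
  "derives P (x # xs) w \<longleftrightarrow> (\<exists>u v. w = u @ v \<and> derives P [x] u \<and> derives P xs v)"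
  using derives_append_iff[of P "[x]" xs w] by simp

lemma derives_Inr: "derives P [Inr a] w \<longleftrightarrow> w = [a]"
proof
  assume "derives P [Inr a] w" then show "w = [a]"
    by (cases rule: derives.cases) (auto simp: derives_Nil_iff)
qed (use derives.der_term[OF derives.der_nil, of P a] in simp)

lemma derives_Inl: "derives P [Inl N] w \<longleftrightarrow> (\<exists>rhs. (N, rhs) \<in> P \<and> derives P rhs w)"
proof
  assume "derives P [Inl N] w" then show "\<exists>rhs. (N, rhs) \<in> P \<and> derives P rhs w"
    by (cases rule: derives.cases) (auto simp: derives_Nil_iff)
qed (use derives.der_nt[of N _ P w "[]" "[]"] derives.der_nil in auto)

section \<open>Left corners\<close>

text \<open>left_corner P z t v: z is a left corner of t with rest v, i.e. t derives a sentential
  form z \<beta> with \<beta> \<Rightarrow>* v through productions in which the path from t to z is preceded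
  only by nullable symbols.\<close>

inductive left_corner :: "(nat \<times> (nat + 'a) list) set \<Rightarrow> nat + 'a \<Rightarrow> nat + 'a \<Rightarrow> 'a list \<Rightarrow> bool"
  for P :: "(nat \<times> (nat + 'a) list) set" where
  corner_refl: "left_corner P z z []"
| corner_step: "(N, al @ z # be) \<in> P \<Longrightarrow> derives P al [] \<Longrightarrow> derives P be u \<Longrightarrow>
    left_corner P (Inl N) t v \<Longrightarrow> left_corner P z t (u @ v)"

lemma left_corner_snoc:
  "left_corner P z t v \<Longrightarrow> (N, al @ t # be) \<in> P \<Longrightarrow> derives P al [] \<Longrightarrow> derives P be u
   \<Longrightarrow> left_corner P z (Inl N) (v @ u)"
proof (induction rule: left_corner.induct)
  case (corner_refl z)
  then show ?case using corner_step[of N al z be P u "Inl N" "[]"] left_corner.corner_refl by auto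
next
  case (corner_step N' al' z be' u' t v)
  then show ?case using left_corner.corner_step[of N' al' z be' P u' "Inl N" "v @ u"] by auto
qed

lemma left_corner_derives:
  "left_corner P z t v \<Longrightarrow> derives P [z] x \<Longrightarrow> derives P [t] (x @ v)"
proof (induction arbitrary: x rule: left_corner.induct)
  case (corner_refl z) then show ?case by simp
next
  case (corner_step N al z be u t v)
  have "derives P ([z] @ be) (x @ u)"
    using derives_append[OF corner_step.prems corner_step.hyps(3)] .
  then have "derives P (al @ z # be) ([] @ x @ u)"
    using derives_append[OF corner_step.hyps(2)] by simp
  then have "derives P [Inl N] (x @ u)"
    using corner_step.hyps(1) derives_Inl by fastforce
  then show ?case using corner_step.IH[of "x @ u"] by simp
qed

lemma derives_first_letter:
  "derives P xs w \<Longrightarrow> w = a # w' \<Longrightarrow> \<exists>i w1 w2. i < length xs \<and> derives P (take i xs) [] \<and>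
     left_corner P (Inr a) (xs ! i) w1 \<and> derives P (drop (Suc i) xs) w2 \<and> w' = w1 @ w2"
proof (induction arbitrary: w' rule: derives.induct)
  case der_nil then show ?case by simp
next
  case (der_term xs w b)
  then have "b = a" "w' = w" by auto
  then show ?case using der_term.hyps corner_refl[of P "Inr a"] derives.der_nil[of P]
    by (intro exI[of _ 0] exI[of _ "[]"] exI[of _ w]) simp
next
  case (der_nt N rhs u xs w)
  show ?case
  proof (cases u)
    case Nil
    with der_nt.prems der_nt.IH(2)[of w'] obtain i w1 w2 where
      h: "i < length xs" "derives P (take i xs) []" "left_corner P (Inr a) (xs ! i) w1"
         "derives P (drop (Suc i) xs) w2" "w' = w1 @ w2" by auto
    have "derives P (take (Suc i) (Inl N # xs)) []"
      using derives.der_nt[OF der_nt.hyps(1), of "[]" "take i xs" "[]"] der_nt.hyps(2) Nil h(2) by simp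
    then show ?thesis using h by (intro exI[of _ "Suc i"] exI[of _ w1] exI[of _ w2]) auto
  next
    case (Cons c u')
    with der_nt.prems have "c = a" "w' = u' @ w" by auto
    with Cons der_nt.IH(1)[of u'] obtain i w1 w2 where
      h: "i < length rhs" "derives P (take i rhs) []" "left_corner P (Inr a) (rhs ! i) w1"
         "derives P (drop (Suc i) rhs) w2" "u' = w1 @ w2" by auto
    have "(N, take i rhs @ rhs ! i # drop (Suc i) rhs) \<in> P"
      using der_nt.hyps(1) h(1) by (simp add: Cons_nth_drop_Suc)
    from left_corner_snoc[OF h(3) this h(2) h(4)] have "left_corner P (Inr a) (Inl N) (w1 @ w2)" .
    then show ?thesis using h \<open>w' = u' @ w\<close> der_nt.hyps(3)
      by (intro exI[of _ 0] exI[of _ "w1 @ w2"] exI[of _ w]) (auto intro: derives.der_nil)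
  qed
qed

lemma derives_first_letter_iff:
  "derives P xs (a # w) \<longleftrightarrow> (\<exists>i w1 w2. i < length xs \<and> derives P (take i xs) [] \<and>
     left_corner P (Inr a) (xs ! i) w1 \<and> derives P (drop (Suc i) xs) w2 \<and> w = w1 @ w2)"
proof
  assume "derives P xs (a # w)"
  then show "\<exists>i w1 w2. i < length xs \<and> derives P (take i xs) [] \<and>
     left_corner P (Inr a) (xs ! i) w1 \<and> derives P (drop (Suc i) xs) w2 \<and> w = w1 @ w2"
    using derives_first_letter[of P xs "a # w" a w] by blast
next
  assume "\<exists>i w1 w2. i < length xs \<and> derives P (take i xs) [] \<and>
     left_corner P (Inr a) (xs ! i) w1 \<and> derives P (drop (Suc i) xs) w2 \<and> w = w1 @ w2"
  then obtain i w1 w2 where h: "i < length xs" "derives P (take i xs) []"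
     "left_corner P (Inr a) (xs ! i) w1" "derives P (drop (Suc i) xs) w2" "w = w1 @ w2" by blast
  have "derives P [xs ! i] (a # w1)"
    using left_corner_derives[OF h(3), of "[a]"] by (simp add: derives_Inr)
  then have "derives P ([xs ! i] @ drop (Suc i) xs) ((a # w1) @ w2)"
    using derives_append h(4) by blast
  then have "derives P (take i xs @ [xs ! i] @ drop (Suc i) xs) ([] @ (a # w1) @ w2)"
    using derives_append h(2) by blast
  moreover have "take i xs @ [xs ! i] @ drop (Suc i) xs = xs"
    using h(1) by (simp add: Cons_nth_drop_Suc)
  ultimately show "derives P xs (a # w)" using h(5) by simp
qed

lemma derives_single_first_letter: "derives P [s] (a # w) \<longleftrightarrow> left_corner P (Inr a) s w"
  by (simp add: derives_first_letter_iff derives_Nil_iff)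

lemma left_corner_iff:
  "left_corner P z t v \<longleftrightarrow> (z = t \<and> v = []) \<or>
    (\<exists>N rhs i u v'. (N, rhs) \<in> P \<and> i < length rhs \<and> rhs ! i = z \<and> derives P (take i rhs) [] \<and>
      derives P (drop (Suc i) rhs) u \<and> left_corner P (Inl N) t v' \<and> v = u @ v')"
proof
  assume "left_corner P z t v"
  then show "(z = t \<and> v = []) \<or>
    (\<exists>N rhs i u v'. (N, rhs) \<in> P \<and> i < length rhs \<and> rhs ! i = z \<and> derives P (take i rhs) [] \<and>
      derives P (drop (Suc i) rhs) u \<and> left_corner P (Inl N) t v' \<and> v = u @ v')"
  proof (cases rule: left_corner.cases)
    case (corner_step N al be u v')
    then show ?thesis
      by (intro disjI2 exI[of _ N] exI[of _ "al @ z # be"] exI[of _ "length al"] exI[of _ u] exI[of _ v'])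
        simp
  qed simp
next
  assume "(z = t \<and> v = []) \<or>
    (\<exists>N rhs i u v'. (N, rhs) \<in> P \<and> i < length rhs \<and> rhs ! i = z \<and> derives P (take i rhs) [] \<and>
      derives P (drop (Suc i) rhs) u \<and> left_corner P (Inl N) t v' \<and> v = u @ v')"
  then show "left_corner P z t v"
  proof
    assume "\<exists>N rhs i u v'. (N, rhs) \<in> P \<and> i < length rhs \<and> rhs ! i = z \<and>
      derives P (take i rhs) [] \<and> derives P (drop (Suc i) rhs) u \<and> left_corner P (Inl N) t v' \<and> v = u @ v'"
    then obtain N rhs i u v' where h: "(N, rhs) \<in> P" "i < length rhs" "rhs ! i = z"
      "derives P (take i rhs) []" "derives P (drop (Suc i) rhs) u" "left_corner P (Inl N) t v'" "v = u @ v'"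
      by blast
    have "(N, take i rhs @ z # drop (Suc i) rhs) \<in> P"
      using h(1,2) by (simp add: Cons_nth_drop_Suc h(3)[symmetric])
    from corner_step[OF this h(4) h(5) h(6)] show ?thesis using h(7) by simp
  qed (simp add: corner_refl)
qed

definition unit_step :: "(nat \<times> (nat + 'a) list) set \<Rightarrow> nat + 'a \<Rightarrow> nat + 'a \<Rightarrow> bool" where
  "unit_step P s r \<longleftrightarrow> (\<exists>N rhs i. (N, rhs) \<in> P \<and> i < length rhs \<and> rhs ! i = s \<and> r = Inl N \<and>
      derives P (take i rhs) [] \<and> derives P (drop (Suc i) rhs) [])"

lemma unit_steps_left_corner:
  "(unit_step P)\<^sup>*\<^sup>* s r \<Longrightarrow> left_corner P r t x \<Longrightarrow> left_corner P s t x"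
proof (induction rule: converse_rtranclp_induct)
  case (step s s')
  then have "left_corner P s t ([] @ x)"
    unfolding unit_step_def using left_corner_iff[of P s t "[] @ x"] by blast
  then show ?case by simp
qed

lemma left_corner_nonempty:
  "left_corner P s t v \<Longrightarrow> v \<noteq> [] \<Longrightarrow> \<exists>N rhs i u v'. (N, rhs) \<in> P \<and> i < length rhs \<and>
     (unit_step P)\<^sup>*\<^sup>* s (rhs ! i) \<and> derives P (take i rhs) [] \<and> derives P (drop (Suc i) rhs) u \<and>
     u \<noteq> [] \<and> left_corner P (Inl N) t v' \<and> v = u @ v'"
proof (induction rule: left_corner.induct)
  case (corner_refl z) then show ?case by simp
next
  case (corner_step N al z be u t v)
  show ?case
  proof (cases "u = []")
    case False
    then show ?thesis using corner_step.hyps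
      by (intro exI[of _ N] exI[of _ "al @ z # be"] exI[of _ "length al"] exI[of _ u] exI[of _ v]) simp
  next
    case True
    with corner_step.prems have "v \<noteq> []" by simp
    with corner_step.IH obtain N' rhs i u' v' where h: "(N', rhs) \<in> P" "i < length rhs"
      "(unit_step P)\<^sup>*\<^sup>* (Inl N) (rhs ! i)" "derives P (take i rhs) []" "derives P (drop (Suc i) rhs) u'"
      "u' \<noteq> []" "left_corner P (Inl N') t v'" "v = u' @ v'" by blast
    have "unit_step P z (Inl N)" unfolding unit_step_def using corner_step.hyps True
      by (intro exI[of _ N] exI[of _ "al @ z # be"] exI[of _ "length al"]) simp
    then have "(unit_step P)\<^sup>*\<^sup>* z (rhs ! i)" using h(3) by (rule converse_rtranclp_into_rtranclp)
    then show ?thesis using h True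
      by (intro exI[of _ N'] exI[of _ rhs] exI[of _ i] exI[of _ u'] exI[of _ v']) simp
  qed
qed

lemma left_corner_Cons_iff:
  "left_corner P s t (a # w) \<longleftrightarrow> (\<exists>N rhs i u v. (N, rhs) \<in> P \<and> i < length rhs \<and>
     (unit_step P)\<^sup>*\<^sup>* s (rhs ! i) \<and> derives P (take i rhs) [] \<and>
     derives P (drop (Suc i) rhs) (a # u) \<and> left_corner P (Inl N) t v \<and> w = u @ v)"
proof
  assume "left_corner P s t (a # w)"
  from left_corner_nonempty[OF this] obtain N rhs i u v where h: "(N, rhs) \<in> P" "i < length rhs"
      "(unit_step P)\<^sup>*\<^sup>* s (rhs ! i)" "derives P (take i rhs) []" "derives P (drop (Suc i) rhs) u"
      "u \<noteq> []" "left_corner P (Inl N) t v" "a # w = u @ v" by blast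
  then obtain u' where "u = a # u'" "w = u' @ v" by (cases u) auto
  with h show "\<exists>N rhs i u v. (N, rhs) \<in> P \<and> i < length rhs \<and>
     (unit_step P)\<^sup>*\<^sup>* s (rhs ! i) \<and> derives P (take i rhs) [] \<and>
     derives P (drop (Suc i) rhs) (a # u) \<and> left_corner P (Inl N) t v \<and> w = u @ v" by blast
next
  assume "\<exists>N rhs i u v. (N, rhs) \<in> P \<and> i < length rhs \<and>
     (unit_step P)\<^sup>*\<^sup>* s (rhs ! i) \<and> derives P (take i rhs) [] \<and>
     derives P (drop (Suc i) rhs) (a # u) \<and> left_corner P (Inl N) t v \<and> w = u @ v"
  then obtain N rhs i u v where h: "(N, rhs) \<in> P" "i < length rhs" "(unit_step P)\<^sup>*\<^sup>* s (rhs ! i)"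
     "derives P (take i rhs) []" "derives P (drop (Suc i) rhs) (a # u)" "left_corner P (Inl N) t v"
     "w = u @ v" by blast
  have "left_corner P (rhs ! i) t ((a # u) @ v)"
    using left_corner_iff[of P "rhs ! i" t "(a # u) @ v"] h(1,2,4,5,6) by blast
  from unit_steps_left_corner[OF h(3) this] show "left_corner P s t (a # w)" using h(7) by simp
qed

section \<open>Items and the quotients of their languages\<close>

text \<open>An item stands for the nonempty words derived from a symbol, or the nonempty rests of
  words derived from t with left corner s.\<close>

datatype 'a item = Sym "nat + 'a" | Corner "nat + 'a" "nat + 'a"

fun item_lang :: "(nat \<times> (nat + 'a) list) set \<Rightarrow> 'a item \<Rightarrow> 'a list set" where
  "item_lang P (Sym s) = {w. w \<noteq> [] \<and> derives P [s] w}"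
| "item_lang P (Corner s t) = {w. w \<noteq> [] \<and> left_corner P s t w}"

definition syms :: "(nat \<times> (nat + 'a) list) set \<Rightarrow> nat \<Rightarrow> (nat + 'a) set" where
  "syms P S = insert (Inl S) (range Inr \<union> Inl ` fst ` P \<union> (\<Union>p\<in>P. set (snd p)))"

definition items :: "(nat \<times> (nat + 'a) list) set \<Rightarrow> nat \<Rightarrow> 'a item set" where
  "items P S = Sym ` syms P S \<union> (\<lambda>(s, t). Corner s t) ` (syms P S \<times> syms P S)"

lemma finite_items: "finite P \<Longrightarrow> finite (items (P :: (nat \<times> (nat + 'a::finite) list) set) S)"
  unfolding items_def syms_def by auto

lemma rhs_syms: "p \<in> P \<Longrightarrow> set (snd p) \<subseteq> syms P S"
  unfolding syms_def by blast

lemma lhs_syms: "p \<in> P \<Longrightarrow> Inl (fst p) \<in> syms P S"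
  unfolding syms_def by blast

definition expressible :: "(nat \<times> (nat + 'a) list) set \<Rightarrow> nat \<Rightarrow> 'a list set \<Rightarrow> bool" where
  "expressible P S K \<longleftrightarrow>
     (\<exists>D. finite D \<and> D \<subseteq> lists (items P S) \<and> K = (\<Union>d\<in>D. concs (item_lang P) d))"

lemma expressible_Nil: "expressible P S {[]}"
  unfolding expressible_def by (intro exI[of _ "{[]}"]) auto

lemma expressible_empty: "expressible P S {}"
  unfolding expressible_def by (intro exI[of _ "{}"]) auto

lemma expressible_Un: "expressible P S A \<Longrightarrow> expressible P S B \<Longrightarrow> expressible P S (A \<union> B)"
  unfolding expressible_def by (metis (no_types, lifting) UN_Un finite_UnI le_sup_iff)

lemma expressible_UN:
  "finite I \<Longrightarrow> (\<And>x. x \<in> I \<Longrightarrow> expressible P S (A x)) \<Longrightarrow> expressible P S (\<Union>x\<in>I. A x)"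
proof (induction I rule: finite_induct)
  case empty
  then show ?case by (simp add: expressible_empty)
next
  case (insert x I)
  then show ?case using expressible_Un[of P S "A x"] by simp
qed

lemma expressible_conc:
  assumes "expressible P S A" "expressible P S B"
  shows "expressible P S (conc A B)"
proof -
  obtain D1 D2 where D: "finite D1" "D1 \<subseteq> lists (items P S)" "A = (\<Union>d\<in>D1. concs (item_lang P) d)"
    "finite D2" "D2 \<subseteq> lists (items P S)" "B = (\<Union>d\<in>D2. concs (item_lang P) d)"
    using assms unfolding expressible_def by blast
  define D where "D = (\<Union>d1\<in>D1. (\<lambda>d2. d1 @ d2) ` D2)"
  have "conc A B = (\<Union>d1\<in>D1. \<Union>d2\<in>D2. concs (item_lang P) (d1 @ d2))"
    unfolding D(3,6) conc_UN_left conc_UN_right concs_append by (rule SUP_commute)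
  also have "\<dots> = (\<Union>d\<in>D. concs (item_lang P) d)"
    unfolding D_def by (simp add: UN_UN_flatten)
  finally have "conc A B = (\<Union>d\<in>D. concs (item_lang P) d)" .
  moreover have "finite D" "D \<subseteq> lists (items P S)"
    unfolding D_def using D(1,2,4,5) by (force simp: subset_iff)+
  ultimately show ?thesis unfolding expressible_def by blast
qed

lemma expressible_item:
  assumes "g \<in> items P S" and "K - {[]} = item_lang P g"
  shows "expressible P S K"
proof -
  define D where "D = insert [g] (if [] \<in> K then {[]} else {})"
  have "K = (\<Union>d\<in>D. concs (item_lang P) d)"
    using assms(2) by (auto simp: D_def conc_def)
  moreover have "finite D" "D \<subseteq> lists (items P S)"
    using assms(1) by (auto simp: D_def)
  ultimately show ?thesis unfolding expressible_def by blast
qed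

lemma expressible_derives: "set b \<subseteq> syms P S \<Longrightarrow> expressible P S {w. derives P b w}"
proof (induction b)
  case Nil
  show ?case by (simp add: derives_Nil_iff expressible_Nil)
next
  case (Cons s b)
  have "{w. derives P (s # b) w} = conc {w. derives P [s] w} {w. derives P b w}"
    by (auto simp: conc_def derives_Cons_iff[of P s b])
  moreover have "expressible P S {w. derives P [s] w}"
    using Cons.prems by (intro expressible_item[of "Sym s"]) (auto simp: items_def)
  ultimately show ?case using Cons by (simp add: expressible_conc)
qed

lemma expressible_left_corner:
  "s \<in> syms P S \<Longrightarrow> t \<in> syms P S \<Longrightarrow> expressible P S {w. left_corner P s t w}"
  by (intro expressible_item[of "Corner s t"]) (auto simp: items_def)

lemma expressible_terminal_corner:
  assumes fin: "finite P" and Z: "Z \<in> syms P S"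
  shows "expressible P S {w. left_corner P (Inr a) Z w}"
proof -
  have eq: "{w. left_corner P (Inr a) Z w} = (if Inr a = Z then {[]} else {}) \<union>
     (\<Union>p\<in>P. \<Union>i\<in>{i. i < length (snd p) \<and> snd p ! i = Inr a \<and> derives P (take i (snd p)) []}.
        conc {u. derives P (drop (Suc i) (snd p)) u} {v. left_corner P (Inl (fst p)) Z v})"
    (is "?L = ?R")
  proof (rule set_eqI, rule iffI)
    fix w assume "w \<in> ?L"
    then have "left_corner P (Inr a) Z w" by simp
    then consider (r) "Inr a = Z" "w = []"
      | (s) N rhs i u v' where "(N, rhs) \<in> P" "i < length rhs" "rhs ! i = Inr a"
         "derives P (take i rhs) []" "derives P (drop (Suc i) rhs) u" "left_corner P (Inl N) Z v'" "w = u @ v'"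
      using left_corner_iff[of P "Inr a" Z w] by blast
    then show "w \<in> ?R"
    proof cases
      case r then show ?thesis by simp
    next
      case s
      have "w \<in> conc {u. derives P (drop (Suc i) (snd (N, rhs))) u} {v. left_corner P (Inl (fst (N, rhs))) Z v}"
        using s unfolding conc_def by auto
      moreover have "i \<in> {i. i < length (snd (N, rhs)) \<and> snd (N, rhs) ! i = Inr a \<and> derives P (take i (snd (N, rhs))) []}"
        using s by simp
      ultimately show ?thesis using s(1) by (intro UnI2 UN_I[of "(N, rhs)"]) (auto intro: UN_I[of i])
    qed
  next
    fix w assume "w \<in> ?R"
    then consider (r) "Inr a = Z" "w = []"
      | (s) N rhs i u v' where "(N, rhs) \<in> P" "i < length rhs" "rhs ! i = Inr a"
         "derives P (take i rhs) []" "derives P (drop (Suc i) rhs) u" "left_corner P (Inl N) Z v'" "w = u @ v'"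
      unfolding conc_def by (auto split: if_splits)
    then show "w \<in> ?L"
    proof cases
      case r then show ?thesis by (simp add: corner_refl)
    next
      case s then show ?thesis using left_corner_iff[of P "Inr a" Z w] by blast
    qed
  qed
  have "expressible P S (conc {u. derives P (drop (Suc i) (snd p)) u} {v. left_corner P (Inl (fst p)) Z v})"
    if "p \<in> P" for p i
    using that Z rhs_syms[OF that, of S] lhs_syms[OF that, of S] set_drop_subset[of "Suc i" "snd p"]
    by (intro expressible_conc expressible_derives expressible_left_corner) auto
  then show ?thesis unfolding eq
    by (intro expressible_Un expressible_UN) (auto simp: fin expressible_Nil expressible_empty)
qed

lemma expressible_derives_quotient:
  assumes fin: "finite P" and b: "set b \<subseteq> syms P S"
  shows "expressible P S {w. derives P b (a # w)}"
proof -
  have eq: "{w. derives P b (a # w)} =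
     (\<Union>i\<in>{i. i < length b \<and> derives P (take i b) []}.
        conc {w1. left_corner P (Inr a) (b ! i) w1} {w2. derives P (drop (Suc i) b) w2})"
    (is "?L = ?R")
  proof (rule set_eqI, rule iffI)
    fix w assume "w \<in> ?L"
    then obtain i w1 w2 where s: "i < length b" "derives P (take i b) []"
       "left_corner P (Inr a) (b ! i) w1" "derives P (drop (Suc i) b) w2" "w = w1 @ w2"
      using derives_first_letter_iff[of P b a w] by auto
    have "w \<in> conc {w1. left_corner P (Inr a) (b ! i) w1} {w2. derives P (drop (Suc i) b) w2}"
      using s unfolding conc_def by auto
    then show "w \<in> ?R" using s by blast
  next
    fix w assume "w \<in> ?R"
    then obtain i w1 w2 where s: "i < length b" "derives P (take i b) []"
       "left_corner P (Inr a) (b ! i) w1" "derives P (drop (Suc i) b) w2" "w = w1 @ w2"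
      unfolding conc_def by auto
    then show "w \<in> ?L" using derives_first_letter_iff[of P b a w] by auto
  qed
  have "expressible P S (conc {w1. left_corner P (Inr a) (b ! i) w1} {w2. derives P (drop (Suc i) b) w2})"
    if "i < length b" for i
    using that b set_drop_subset[of "Suc i" b]
    by (intro expressible_conc expressible_terminal_corner[OF fin] expressible_derives) auto
  then show ?thesis unfolding eq by (intro expressible_UN) auto
qed

lemma expressible_corner_quotient:
  assumes fin: "finite P" and st: "s \<in> syms P S" "t \<in> syms P S"
  shows "expressible P S {w. left_corner P s t (a # w)}"
proof -
  have eq: "{w. left_corner P s t (a # w)} =
     (\<Union>p\<in>P. \<Union>i\<in>{i. i < length (snd p) \<and> (unit_step P)\<^sup>*\<^sup>* s (snd p ! i) \<and> derives P (take i (snd p)) []}.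
        conc {u. derives P (drop (Suc i) (snd p)) (a # u)} {v. left_corner P (Inl (fst p)) t v})"
    (is "?L = ?R")
  proof (rule set_eqI, rule iffI)
    fix w assume "w \<in> ?L"
    then obtain N rhs i u' v' where h: "(N, rhs) \<in> P" "i < length rhs" "(unit_step P)\<^sup>*\<^sup>* s (rhs ! i)"
     "derives P (take i rhs) []" "derives P (drop (Suc i) rhs) (a # u')" "left_corner P (Inl N) t v'" "w = u' @ v'"
      using left_corner_Cons_iff[of P s t a w] by auto
    have "w \<in> conc {u. derives P (drop (Suc i) (snd (N, rhs))) (a # u)} {v. left_corner P (Inl (fst (N, rhs))) t v}"
      using h unfolding conc_def by auto
    moreover have "i \<in> {i. i < length (snd (N, rhs)) \<and> (unit_step P)\<^sup>*\<^sup>* s (snd (N, rhs) ! i) \<and> derives P (take i (snd (N, rhs))) []}"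
      using h by simp
    ultimately show "w \<in> ?R" using h(1) by (intro UN_I[of "(N, rhs)"]) (auto intro: UN_I[of i])
  next
    fix w assume "w \<in> ?R"
    then obtain N rhs i u' v' where h: "(N, rhs) \<in> P" "i < length rhs" "(unit_step P)\<^sup>*\<^sup>* s (rhs ! i)"
     "derives P (take i rhs) []" "derives P (drop (Suc i) rhs) (a # u')" "left_corner P (Inl N) t v'" "w = u' @ v'"
      unfolding conc_def by auto
    then show "w \<in> ?L" using left_corner_Cons_iff[of P s t a w] by blast
  qed
  have "expressible P S (conc {u. derives P (drop (Suc i) (snd p)) (a # u)} {v. left_corner P (Inl (fst p)) t v})"
    if "p \<in> P" for p i
    using that st rhs_syms[OF that, of S] lhs_syms[OF that, of S] set_drop_subset[of "Suc i" "snd p"]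
    by (intro expressible_conc expressible_derives_quotient[OF fin] expressible_left_corner) auto
  then show ?thesis unfolding eq by (intro expressible_UN) (auto simp: fin)
qed

lemma expressible_item_quotient:
  assumes fin: "finite P" and g: "g \<in> items P S"
  shows "expressible P S {w. a # w \<in> item_lang P g}"
proof (cases g)
  case (Sym s)
  then have "s \<in> syms P S" using g unfolding items_def by auto
  then show ?thesis
    using expressible_terminal_corner[OF fin] Sym by (simp add: derives_single_first_letter)
next
  case (Corner s t)
  then have "s \<in> syms P S" "t \<in> syms P S" using g unfolding items_def by auto
  then show ?thesis using expressible_corner_quotient[OF fin] Corner by simp
qed

theorem cfl_bracket_machine:
  fixes L :: "'a::finite list set"
  assumes "cfl L"
  shows "\<exists>T Ou. (\<forall>a x y. finite (T a x y) \<and> T a x y \<subseteq> lists {Op 1, Op 2, Cl 1, Cl 2}) \<and>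
    (\<forall>x. finite (Ou x) \<and> Ou x \<subseteq> lists {Op 1, Op 2, Cl 1, Cl 2}) \<and>
    (\<forall>w. w \<in> L \<longleftrightarrow> (\<exists>r\<in>emits T Ou {0, 1} 0 w. stack_run [] r = Some []))"
proof -
  obtain P S where fin: "finite P" and L: "L = {w. derives P [Inl S] w}"
    using assms unfolding cfl_def by blast
  define I where "I = items P S"
  have "finite I" using finite_items[OF fin] unfolding I_def .
  then obtain f :: "'a item \<Rightarrow> nat" where inj: "inj_on f I"
    using finite_imp_inj_to_nat_seg by blast
  define D where "D g a = (SOME D. finite D \<and> D \<subseteq> lists I \<and>
      {w. a # w \<in> item_lang P g} = (\<Union>d\<in>D. concs (item_lang P) d))" for g a
  have D: "finite (D g a) \<and> D g a \<subseteq> lists I \<and>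
      {w. a # w \<in> item_lang P g} = (\<Union>d\<in>D g a. concs (item_lang P) d)" if "g \<in> I" for g a
    unfolding D_def
    by (rule someI_ex) (use expressible_item_quotient[OF fin] that in \<open>simp add: I_def expressible_def\<close>)
  define g0 :: "'a item" where "g0 = Sym (Inl S)"
  have g0: "g0 \<in> I" unfolding g0_def I_def items_def syms_def by simp
  let ?T = "stack_trans f I D g0"
  have T_fin: "finite (?T a x y)" for a x y
    using D \<open>finite I\<close> g0 unfolding stack_trans_def by simp
  have T_lists: "?T a x y \<subseteq> lists {Op 1, Op 2, Cl 1, Cl 2}" for a x y
  proof -
    have "push_stack f d \<in> lists {Op 1, Op 2, Cl 1, Cl 2}" "pop_word k \<in> lists {Op 1, Op 2, Cl 1, Cl 2}"
      for d and k :: nat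
      using push_stack_in_lists[of f d] pop_word_in_lists[of k] by auto
    then show ?thesis unfolding stack_trans_def by (simp add: image_subset_iff UN_subset_iff)
  qed
  have Ou: "finite (stack_out L x) \<and> stack_out L x \<subseteq> lists {Op 1, Op 2, Cl 1, Cl 2}" for x
    by (simp add: stack_out_def)
  have accepts: "(\<exists>r\<in>emits ?T (stack_out L) {0, 1} 0 w. stack_run [] r = Some []) \<longleftrightarrow> w \<in> L" for w
  proof (rule stack_machine_accepts[OF inj _ _ g0])
    show "[] \<notin> item_lang P g" for g by (cases g) auto
    show "D g a \<subseteq> lists I \<and> {w. a # w \<in> item_lang P g} = (\<Union>d\<in>D g a. concs (item_lang P) d)"
      if "g \<in> I" for g a using D[OF that] by blast
    show "a # w \<in> L \<longleftrightarrow> a # w \<in> item_lang P g0" for a w by (simp add: L g0_def)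
  qed
  have "(\<forall>a x y. finite (?T a x y) \<and> ?T a x y \<subseteq> lists {Op 1, Op 2, Cl 1, Cl 2}) \<and>
    (\<forall>x. finite (stack_out L x) \<and> stack_out L x \<subseteq> lists {Op 1, Op 2, Cl 1, Cl 2}) \<and>
    (\<forall>w. w \<in> L \<longleftrightarrow> (\<exists>r\<in>emits ?T (stack_out L) {0, 1} 0 w. stack_run [] r = Some []))"
    using T_fin T_lists Ou accepts by blast
  then show ?thesis by (rule exI[of _ ?T, OF exI[of _ "stack_out L"]])
qed

theorem mainTheorem8:
  fixes R0 :: "'r::semiring_1 set"
    and act :: "'r \<Rightarrow> 'b::comm_monoid_add \<Rightarrow> 'b"
    and B0 :: "'b set"
    and n :: nat
    and \<alpha> :: "paren list \<Rightarrow> 'r"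
    and b0 b1 :: 'b
    and L :: "'a::finite list set"
  assumes idem: "(1::'r) + 1 = 1"
    and R0_fin: "finite R0" and R0_gen: "gen_semiring R0 = UNIV"
    and smod: "semimodule act"
    and B0_fin: "finite B0" and B0_gen: "gen_semimodule act B0 = UNIV"
    and n2: "2 \<le> n"
    and morph: "monoid_morph n \<alpha>"
    and dyck: "\<forall>w \<in> lists (Omega n). leqB b1 (act (\<alpha> w) b0) \<longleftrightarrow> w \<in> Dyck n"
    and prime: "\<forall>c1 c2. leqB b1 (c1 + c2) \<longrightarrow> leqB b1 c1 \<or> leqB b1 c2"
    and cf: "cfl L"
  shows "\<exists>X out t x0. finite X \<and> x0 \<in> X \<and>
           (\<forall>a x y. y \<notin> X \<longrightarrow> t a x y = 0) \<and>
           L = {w. leqB b1 (trace act X out t x0 w)}"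
proof -
  obtain T Ou where T: "\<And>a x y. finite (T a x y) \<and> T a x y \<subseteq> lists {Op 1, Op 2, Cl 1, Cl 2}"
    and Ou: "\<And>x. finite (Ou x) \<and> Ou x \<subseteq> lists {Op 1, Op 2, Cl 1, Cl 2}"
    and accepts: "\<And>w. w \<in> L \<longleftrightarrow> (\<exists>r\<in>emits T Ou {0, 1} 0 w. stack_run [] r = Some [])"
    using cfl_bracket_machine[OF cf] by blast
  have brackets: "lists {Op 1, Op 2, Cl 1, Cl 2} \<subseteq> lists (Omega n)"
    using n2 by (auto simp: Omega_def)
  have T': "\<And>a x y. finite (T a x y) \<and> T a x y \<subseteq> lists (Omega n)"
    and Ou': "\<And>x. finite (Ou x) \<and> Ou x \<subseteq> lists (Omega n)"
    using T Ou brackets by blast+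
  define X :: "nat set" where "X = {0, 1}"
  let ?tr = "trace act X (weighted_out act \<alpha> b0 Ou) (weighted_trans \<alpha> X T) 0"
  have "leqB b1 (?tr w) \<longleftrightarrow> w \<in> L" for w
    using weighted_trace_accepts[OF smod morph _ dyck prime _ T' Ou', where X = X and x = 0 and w = w]
      n2 accepts[of w] by (simp add: X_def)
  then have "finite X \<and> 0 \<in> X \<and> (\<forall>a x y. y \<notin> X \<longrightarrow> weighted_trans \<alpha> X T a x y = 0) \<and>
      L = {w. leqB b1 (?tr w)}"
    by (auto simp: X_def weighted_trans_def)
  then show ?thesis by blast
qed

end
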